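(* Let $T$ be any shortest-path tree of $G$ rooted at $s$, let $R$ be the forest obtained from $T$ by deleting the edges in $E(T)\cap E(D)$, and let $\widetilde{E}$ be the set of edges $\{x,y\}\in E\setminus(E(T)\cup E(D))$ whose endpoints lie in different connected components of $R$. For an ordered pair $(x,y)$ of vertices define $f(x,y)=d_s(x)+w(x,y)+d_t(y)$ if $\{x,y\}\in\widetilde{E}$ and $f(x,y)=\infty$ otherwise. If $(x,y)$ minimizes $f$ over all ordered pairs and $f(x,y)\neq\infty$, then there exists a simple $st$-path of length $f(x,y)$ containing an edge of $\widetilde{E}$, and such a path is an optimal outward path.
   Context: $G=(V,E,w)$ is a simple, connected, undirected graph with positive edge lengths, $s,t\in V$, $d(\cdot,\cdot)$ the shortest path distance, $d_s(v)=d(s,v)$, $d_t(v)=d(v,t)$. A path is always simple; an $st$-path is a simple path from $s$ to $t$, and its length is the sum of its edge lengths. $D$ is the subgraph formed by the union of all shortest $st$-paths of $G$. An optimal outward path is an $st$-path of minimum length among all $st$-paths containing at least one edge of $E\setminus E(D)$. Note $f(x,y)$ and $f(y,x)$ differ in general. *)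

theory Defs
  imports Complex_Main "HOL-Library.Extended_Real"
begin

definition simple_graph :: "'a set \<Rightarrow> 'a set set \<Rightarrow> bool" where
  "simple_graph V E \<longleftrightarrow> finite V \<and> (\<forall>e\<in>E. \<exists>u v. e = {u, v} \<and> u \<in> V \<and> v \<in> V \<and> u \<noteq> v)"

definition path_edges :: "'a list \<Rightarrow> 'a set set" where
  "path_edges p = {{p ! i, p ! Suc i} | i. Suc i < length p}"

definition is_path :: "'a set set \<Rightarrow> 'a \<Rightarrow> 'a \<Rightarrow> 'a list \<Rightarrow> bool" where
  "is_path F u v p \<longleftrightarrow> p \<noteq> [] \<and> hd p = u \<and> last p = v \<and> distinct p \<and> path_edges p \<subseteq> F"

definition path_len :: "('a set \<Rightarrow> real) \<Rightarrow> 'a list \<Rightarrow> real" where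
  "path_len w p = (\<Sum>i<length p - 1. w {p ! i, p ! Suc i})"

definition connected_graph :: "'a set \<Rightarrow> 'a set set \<Rightarrow> bool" where
  "connected_graph V E \<longleftrightarrow> (\<forall>u\<in>V. \<forall>v\<in>V. \<exists>p. is_path E u v p)"

definition dist :: "'a set set \<Rightarrow> ('a set \<Rightarrow> real) \<Rightarrow> 'a \<Rightarrow> 'a \<Rightarrow> real" where
  "dist E w u v = Inf {path_len w p | p. is_path E u v p}"

definition shortest_path :: "'a set set \<Rightarrow> ('a set \<Rightarrow> real) \<Rightarrow> 'a \<Rightarrow> 'a \<Rightarrow> 'a list \<Rightarrow> bool" where
  "shortest_path E w u v p \<longleftrightarrow> is_path E u v p \<and> path_len w p = dist E w u v"

definition ED :: "'a set set \<Rightarrow> ('a set \<Rightarrow> real) \<Rightarrow> 'a \<Rightarrow> 'a \<Rightarrow> 'a set set" where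
  "ED E w s t = \<Union> {path_edges p | p. shortest_path E w s t p}"

definition spanning_tree :: "'a set \<Rightarrow> 'a set set \<Rightarrow> 'a set set \<Rightarrow> bool" where
  "spanning_tree V E T \<longleftrightarrow> T \<subseteq> E \<and> (\<forall>u\<in>V. \<forall>v\<in>V. \<exists>!p. is_path T u v p)"

definition shortest_path_tree :: "'a set \<Rightarrow> 'a set set \<Rightarrow> ('a set \<Rightarrow> real) \<Rightarrow> 'a \<Rightarrow> 'a set set \<Rightarrow> bool" where
  "shortest_path_tree V E w s T \<longleftrightarrow> spanning_tree V E T \<and>
     (\<forall>v\<in>V. \<forall>p. is_path T s v p \<longrightarrow> path_len w p = dist E w s v)"

definition Etilde :: "'a set set \<Rightarrow> ('a set \<Rightarrow> real) \<Rightarrow> 'a \<Rightarrow> 'a \<Rightarrow> 'a set set \<Rightarrow> 'a set set" where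
  "Etilde E w s t T = {e \<in> E - (T \<union> ED E w s t). \<exists>x y. e = {x, y} \<and>
       \<not> (\<exists>p. is_path (T - ED E w s t) x y p)}"

definition fval :: "'a set set \<Rightarrow> ('a set \<Rightarrow> real) \<Rightarrow> 'a \<Rightarrow> 'a \<Rightarrow> 'a set set \<Rightarrow> 'a \<Rightarrow> 'a \<Rightarrow> ereal" where
  "fval E w s t T x y = (if {x, y} \<in> Etilde E w s t T
     then ereal (dist E w s x + w {x, y} + dist E w y t) else \<infinity>)"

definition optimal_outward :: "'a set set \<Rightarrow> ('a set \<Rightarrow> real) \<Rightarrow> 'a \<Rightarrow> 'a \<Rightarrow> 'a list \<Rightarrow> bool" where
  "optimal_outward E w s t p \<longleftrightarrow> is_path E s t p \<and> path_edges p - ED E w s t \<noteq> {} \<and>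
     (\<forall>q. is_path E s t q \<and> path_edges q - ED E w s t \<noteq> {} \<longrightarrow> path_len w p \<le> path_len w q)"

end

theory Submission imports Defs begin

text \<open>Every component of the forest
  R contains at most one vertex of D, since tree paths from s into D stay in D and distances from
  s grow strictly along them. Walking along an st-path whose edges are all in \<open>E_D\<close> or join
  R-connected vertices, one therefore never passes from the component of one D-vertex to that of
  another; so every outward st-path has an edge {u, v} of \<open>E_tilde\<close>, and its length is at
  least f(u, v). Conversely, for {x, y} in \<open>E_tilde\<close> an outward st-path of length at most
  f(x, y) is obtained from the tree path to x, the edge and a shortest y-t path: if the two
  paths meet outside D, shortcutting keeps the path outward; if they meet at a D-vertex c, the
  path is instead rerouted through the component of whichever of x, y has the D-vertex farther
  from s, and the triangle inequality at c bounds its length. With f(x, y) minimal, both bounds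
  meet.\<close>

lemma path_edges_Nil [simp]: "path_edges [] = {}"
  and path_edges_singleton [simp]: "path_edges [a] = {}"
  by (auto simp: path_edges_def)

lemma path_edges_Cons_Cons [simp]: "path_edges (a # b # p) = insert {a, b} (path_edges (b # p))"
  unfolding path_edges_def
proof (intro set_eqI iffI)
  fix e assume "e \<in> {{(a # b # p) ! i, (a # b # p) ! Suc i} |i. Suc i < length (a # b # p)}"
  then show "e \<in> insert {a, b} {{(b # p) ! i, (b # p) ! Suc i} |i. Suc i < length (b # p)}"
    by (auto simp: less_Suc_eq_0_disj nth_Cons split: nat.splits)
next
  fix e assume "e \<in> insert {a, b} {{(b # p) ! i, (b # p) ! Suc i} |i. Suc i < length (b # p)}"
  then show "e \<in> {{(a # b # p) ! i, (a # b # p) ! Suc i} |i. Suc i < length (a # b # p)}"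
  proof
    assume "e = {a, b}" then show ?thesis by (intro CollectI exI[of _ 0]) simp
  next
    assume "e \<in> {{(b # p) ! i, (b # p) ! Suc i} |i. Suc i < length (b # p)}"
    then obtain i where "e = {(b # p) ! i, (b # p) ! Suc i}" "Suc i < length (b # p)" by blast
    then show ?thesis by (intro CollectI exI[of _ "Suc i"]) simp
  qed
qed

lemma path_len_Nil [simp]: "path_len w [] = 0"
  and path_len_singleton [simp]: "path_len w [a] = 0"
  by (auto simp: path_len_def)

lemma path_len_Cons_Cons [simp]: "path_len w (a # b # p) = w {a, b} + path_len w (b # p)"
  unfolding path_len_def by (simp only: length_Cons diff_Suc_1 sum.lessThan_Suc_shift) simp

lemma nth_edge_in_path_edges: "Suc k < length p \<Longrightarrow> {p ! k, p ! Suc k} \<in> path_edges p"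
  unfolding path_edges_def by blast

lemma path_edgesE:
  assumes "e \<in> path_edges p"
  obtains k where "Suc k < length p" "e = {p ! k, p ! Suc k}"
  using assms unfolding path_edges_def by blast

lemma path_edges_append:
  "xs \<noteq> [] \<Longrightarrow> ys \<noteq> [] \<Longrightarrow>
    path_edges (xs @ ys) = path_edges xs \<union> {{last xs, hd ys}} \<union> path_edges ys"
proof (induction xs rule: induct_list012)
  case (3 a b p) then show ?case by (cases ys) auto
qed (auto simp: neq_Nil_conv)

lemma path_len_append:
  "xs \<noteq> [] \<Longrightarrow> ys \<noteq> [] \<Longrightarrow>
    path_len w (xs @ ys) = path_len w xs + w {last xs, hd ys} + path_len w ys"
proof (induction xs rule: induct_list012)
  case (3 a b p) then show ?case by (cases ys) auto
qed (auto simp: neq_Nil_conv)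

lemma path_edges_append_tl:
  "xs \<noteq> [] \<Longrightarrow> ys \<noteq> [] \<Longrightarrow> last xs = hd ys \<Longrightarrow>
    path_edges (xs @ tl ys) = path_edges xs \<union> path_edges ys"
  by (cases ys; cases "tl ys") (auto simp: path_edges_append)

lemma path_len_append_tl:
  "xs \<noteq> [] \<Longrightarrow> ys \<noteq> [] \<Longrightarrow> last xs = hd ys \<Longrightarrow>
    path_len w (xs @ tl ys) = path_len w xs + path_len w ys"
  by (cases ys; cases "tl ys") (auto simp: path_len_append)

lemma path_edges_rev [simp]: "path_edges (rev p) = path_edges p"
proof (induction p)
  case (Cons a p)
  show ?case
  proof (cases p)
    case (Cons b q)
    have "path_edges (rev (a # p)) = path_edges (rev p @ [a])" by simp
    also have "\<dots> = path_edges (rev p) \<union> {{b, a}}"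
      by (subst path_edges_append) (auto simp: last_rev Cons)
    finally show ?thesis using Cons.IH Cons by (auto simp: insert_commute)
  qed simp
qed simp

lemma path_len_rev [simp]: "path_len w (rev p) = path_len w p"
proof (induction p)
  case (Cons a p)
  show ?case
  proof (cases p)
    case (Cons b q)
    have "path_len w (rev (a # p)) = path_len w (rev p @ [a])" by simp
    also have "\<dots> = path_len w (rev p) + w {b, a}"
      by (subst path_len_append) (auto simp: last_rev Cons)
    finally show ?thesis using Cons.IH Cons by (auto simp: insert_commute)
  qed simp
qed simp

lemma take_Suc_append_tl_drop: "i < length p \<Longrightarrow> take (Suc i) p @ tl (drop i p) = p"
  by (metis Cons_nth_drop_Suc append_take_drop_id list.sel(3) take_Suc_conv_app_nth
      append_assoc append_Cons append_Nil)

lemma last_take_Suc: "i < length p \<Longrightarrow> last (take (Suc i) p) = p ! i"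
  by (simp add: take_Suc_conv_app_nth)

lemma path_len_take_drop:
  "i < length p \<Longrightarrow> path_len w p = path_len w (take (Suc i) p) + path_len w (drop i p)"
  by (subst path_len_append_tl[symmetric])
    (auto simp: take_Suc_append_tl_drop last_take_Suc hd_drop_conv_nth)

lemma path_edges_take_drop:
  "i < length p \<Longrightarrow> path_edges p = path_edges (take (Suc i) p) \<union> path_edges (drop i p)"
  by (subst path_edges_append_tl[symmetric])
    (auto simp: take_Suc_append_tl_drop last_take_Suc hd_drop_conv_nth)

lemma path_len_nonneg: "\<forall>e\<in>path_edges p. 0 < w e \<Longrightarrow> 0 \<le> path_len w p"
proof (induction p rule: induct_list012)
  case (3 a b p) then show ?case by (smt (verit) insertCI path_edges_Cons_Cons path_len_Cons_Cons)
qed auto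

lemma path_len_pos: "\<forall>e\<in>path_edges p. 0 < w e \<Longrightarrow> 2 \<le> length p \<Longrightarrow> 0 < path_len w p"
proof (cases p rule: remdups_adj.cases)
  case (3 a b q)
  assume pos: "\<forall>e\<in>path_edges p. 0 < w e"
  then have "0 \<le> path_len w (b # q)" using 3 by (intro path_len_nonneg) auto
  then show ?thesis using pos 3 by auto
qed auto

lemma path_len_take_le:
  "\<forall>e\<in>path_edges p. 0 < w e \<Longrightarrow> i < length p \<Longrightarrow> path_len w (take (Suc i) p) \<le> path_len w p"
  using path_len_take_drop[of i p w] path_len_nonneg[of "drop i p" w] path_edges_take_drop[of i p]
  by auto

lemma path_len_drop_le:
  "\<forall>e\<in>path_edges p. 0 < w e \<Longrightarrow> i < length p \<Longrightarrow> path_len w (drop i p) \<le> path_len w p"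
  using path_len_take_drop[of i p w] path_len_nonneg[of "take (Suc i) p" w] path_edges_take_drop[of i p]
  by auto

lemma set_subset_path_edges: "set (a # p) \<subseteq> insert a (\<Union> (path_edges (a # p)))"
proof (induction p arbitrary: a)
  case (Cons b p)
  then show ?case by auto
qed simp

lemma is_path_singleton [simp]: "is_path F u u [u]"
  by (simp add: is_path_def)

lemma is_path_mono: "is_path F u v p \<Longrightarrow> F \<subseteq> F' \<Longrightarrow> is_path F' u v p"
  by (auto simp: is_path_def)

lemma is_path_rev: "is_path F u v p \<Longrightarrow> is_path F v u (rev p)"
  by (auto simp: is_path_def hd_rev last_rev)

lemma is_path_take: "is_path F u v p \<Longrightarrow> i < length p \<Longrightarrow> is_path F u (p ! i) (take (Suc i) p)"
  unfolding is_path_def using path_edges_take_drop[of i p] by (simp add: last_take_Suc)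

lemma is_path_drop: "is_path F u v p \<Longrightarrow> i < length p \<Longrightarrow> is_path F (p ! i) v (drop i p)"
  unfolding is_path_def using path_edges_take_drop[of i p] by (simp add: hd_drop_conv_nth)

lemma is_path_append:
  "is_path F u a p \<Longrightarrow> is_path F b v q \<Longrightarrow> set p \<inter> set q = {} \<Longrightarrow> {a, b} \<in> F
    \<Longrightarrow> is_path F u v (p @ q)"
  unfolding is_path_def by (auto simp: path_edges_append)

lemma is_path_append_tl:
  assumes p: "is_path F u a p" and q: "is_path F a v q" and disj: "set p \<inter> set q \<subseteq> {a}"
  shows "is_path F u v (p @ tl q)"
proof -
  have q_Cons: "q = a # tl q" using q unfolding is_path_def by (metis list.collapse)
  then have "a \<notin> set (tl q)" using q unfolding is_path_def by (metis distinct.simps(2))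
  moreover have "set q = insert a (set (tl q))" by (subst q_Cons) simp
  ultimately have "set p \<inter> set (tl q) = {}" using disj by blast
  moreover have "last (p @ tl q) = v"
    using p q q_Cons unfolding is_path_def by (cases "tl q") auto
  moreover have "path_edges (p @ tl q) = path_edges p \<union> path_edges q"
    using p q q_Cons unfolding is_path_def by (intro path_edges_append_tl) auto
  ultimately show ?thesis using p q unfolding is_path_def by (simp add: distinct_tl)
qed

lemma is_path_edgeless: "is_path F u v p \<Longrightarrow> path_edges p = {} \<Longrightarrow> u = v"
  unfolding is_path_def by (cases p rule: remdups_adj.cases) auto

lemma is_path_hd_last: "is_path F u v p \<Longrightarrow> u \<in> set p \<and> v \<in> set p"
  unfolding is_path_def by auto

lemma is_path_join:
  assumes p: "is_path F u a p" and q: "is_path F b v q" and meet: "set p \<inter> set q \<noteq> {}"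
  obtains i j where "i < length p" "j < length q" "p ! i = q ! j"
    "is_path F u v (take (Suc i) p @ tl (drop j q))"
    "path_len w (take (Suc i) p @ tl (drop j q)) = path_len w (take (Suc i) p) + path_len w (drop j q)"
    "path_edges (take (Suc i) p @ tl (drop j q)) = path_edges (take (Suc i) p) \<union> path_edges (drop j q)"
proof -
  define i where "i = (LEAST i. i < length p \<and> p ! i \<in> set q)"
  have "\<exists>i. i < length p \<and> p ! i \<in> set q" using meet by (auto simp: in_set_conv_nth)
  then have i: "i < length p" "p ! i \<in> set q"
    unfolding i_def by (metis (mono_tags, lifting) LeastI_ex)+
  have before_i: "p ! k \<notin> set q" if "k < i" for k
    using not_less_Least[OF that[unfolded i_def]] that i(1) by auto
  from i obtain j where j: "j < length q" "q ! j = p ! i" by (auto simp: in_set_conv_nth)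
  have tp: "is_path F u (p ! i) (take (Suc i) p)" using is_path_take[OF p i(1)] .
  have dq: "is_path F (p ! i) v (drop j q)" using is_path_drop[OF q j(1)] j(2) by simp
  have "set (take (Suc i) p) \<inter> set (drop j q) \<subseteq> {p ! i}"
  proof
    fix z assume z: "z \<in> set (take (Suc i) p) \<inter> set (drop j q)"
    then obtain k where k: "k < Suc i" "k < length p" "z = p ! k" by (auto simp: in_set_conv_nth)
    have "z \<in> set q" using z by (auto dest: in_set_dropD)
    then have "k = i" using before_i k less_SucE by blast
    then show "z \<in> {p ! i}" using k by simp
  qed
  then have "is_path F u v (take (Suc i) p @ tl (drop j q))"
    by (rule is_path_append_tl[OF tp dq])
  moreover have "take (Suc i) p \<noteq> []" "drop j q \<noteq> []" "last (take (Suc i) p) = hd (drop j q)"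
    using tp dq unfolding is_path_def by auto
  ultimately show ?thesis
    using that[OF i(1) j(1) j(2)[symmetric]] by (simp add: path_len_append_tl path_edges_append_tl)
qed

locale spt_graph =
  fixes V :: "'a set" and E :: "'a set set" and w :: "'a set \<Rightarrow> real"
    and s t :: 'a and T :: "'a set set"
  assumes simple: "simple_graph V E" and connected: "connected_graph V E"
    and weight_pos: "\<forall>e\<in>E. 0 < w e"
    and s_in_V: "s \<in> V" and t_in_V: "t \<in> V"
    and spt: "shortest_path_tree V E w s T"
begin

abbreviation d :: "'a \<Rightarrow> 'a \<Rightarrow> real" where "d \<equiv> dist E w"

lemma edge_subset_V: "e \<in> E \<Longrightarrow> e \<subseteq> V"
  using simple unfolding simple_graph_def by fastforce

lemma path_weights_pos: "is_path E u v p \<Longrightarrow> \<forall>e\<in>path_edges p. 0 < w e"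
  using weight_pos unfolding is_path_def by blast

lemma set_path_subset: "is_path E u v p \<Longrightarrow> set p \<subseteq> insert u V"
proof -
  assume p: "is_path E u v p"
  then have "p = u # tl p" "path_edges p \<subseteq> E" unfolding is_path_def by auto
  then show ?thesis using set_subset_path_edges[of u "tl p"] edge_subset_V by auto
qed

lemma finite_paths: "finite {p. is_path E u v p}"
proof (rule finite_subset)
  have fin: "finite (insert u V)" using simple unfolding simple_graph_def by simp
  show "{p. is_path E u v p} \<subseteq> {p. set p \<subseteq> insert u V \<and> length p \<le> card (insert u V)}"
  proof clarify
    fix p assume p: "is_path E u v p"
    then have "set p \<subseteq> insert u V" by (rule set_path_subset)
    moreover have "length p = card (set p)" using p unfolding is_path_def by (simp add: distinct_card)
    ultimately show "set p \<subseteq> insert u V \<and> length p \<le> card (insert u V)"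
      using card_mono[OF fin] by auto
  qed
  show "finite {p. set p \<subseteq> insert u V \<and> length p \<le> card (insert u V)}"
    using finite_lists_length_le[OF fin] by simp
qed

lemma dist_le: "is_path E u v p \<Longrightarrow> d u v \<le> path_len w p"
  unfolding dist_def
proof (rule cInf_lower)
  show "bdd_below {path_len w p |p. is_path E u v p}"
    by (intro bdd_belowI[of _ 0]) (use path_len_nonneg path_weights_pos in blast)
qed blast

lemma ex_shortest_path: "is_path E u v p \<Longrightarrow> \<exists>q. shortest_path E w u v q"
proof -
  assume "is_path E u v p"
  let ?L = "{path_len w q | q. is_path E u v q}"
  have ne: "?L \<noteq> {}" using \<open>is_path E u v p\<close> by blast
  have fin: "finite ?L" using finite_paths by (simp add: setcompr_eq_image)
  have "Inf ?L \<in> ?L" using cInf_eq_Min[OF fin ne] Min_in[OF fin ne] by simp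
  then show ?thesis unfolding shortest_path_def dist_def by auto
qed

lemma ex_shortest_path_V: "u \<in> V \<Longrightarrow> v \<in> V \<Longrightarrow> \<exists>q. shortest_path E w u v q"
  using connected ex_shortest_path unfolding connected_graph_def by blast

lemma dist_le_path_len_add:
  assumes p: "is_path E u a p" and q: "is_path E a v q"
  shows "d u v \<le> path_len w p + path_len w q"
proof -
  have "set p \<inter> set q \<noteq> {}" using is_path_hd_last[OF p] is_path_hd_last[OF q] by blast
  then obtain i j where ij: "i < length p" "j < length q"
    "is_path E u v (take (Suc i) p @ tl (drop j q))"
    "path_len w (take (Suc i) p @ tl (drop j q)) = path_len w (take (Suc i) p) + path_len w (drop j q)"
    by (rule is_path_join[OF p q, where w = w]) blast
  have "path_len w (take (Suc i) p) \<le> path_len w p"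
    using path_len_take_le[OF path_weights_pos[OF p] ij(1)] .
  moreover have "path_len w (drop j q) \<le> path_len w q"
    using path_len_drop_le[OF path_weights_pos[OF q] ij(2)] .
  ultimately show ?thesis using dist_le[OF ij(3)] ij(4) by linarith
qed

lemma shortest_path_split:
  assumes p: "shortest_path E w u v p" and k: "k < length p"
  shows "shortest_path E w u (p ! k) (take (Suc k) p)" and "shortest_path E w (p ! k) v (drop k p)"
proof -
  have pp: "is_path E u v p" "path_len w p = d u v" using p unfolding shortest_path_def by auto
  have take: "is_path E u (p ! k) (take (Suc k) p)" and drop: "is_path E (p ! k) v (drop k p)"
    using is_path_take[OF pp(1) k] is_path_drop[OF pp(1) k] .
  obtain P where P: "is_path E u (p ! k) P" "path_len w P = d u (p ! k)"
    using ex_shortest_path[OF take] unfolding shortest_path_def by blast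
  obtain Q where Q: "is_path E (p ! k) v Q" "path_len w Q = d (p ! k) v"
    using ex_shortest_path[OF drop] unfolding shortest_path_def by blast
  have "d u v \<le> d u (p ! k) + path_len w (drop k p)"
    using dist_le_path_len_add[OF P(1) drop] P(2) by simp
  moreover have "d u v \<le> path_len w (take (Suc k) p) + d (p ! k) v"
    using dist_le_path_len_add[OF take Q(1)] Q(2) by simp
  moreover have "path_len w p = path_len w (take (Suc k) p) + path_len w (drop k p)"
    using path_len_take_drop[OF k] .
  ultimately have "path_len w (take (Suc k) p) = d u (p ! k)" "path_len w (drop k p) = d (p ! k) v"
    using dist_le[OF take] dist_le[OF drop] pp(2) by linarith+
  then show "shortest_path E w u (p ! k) (take (Suc k) p)"
    and "shortest_path E w (p ! k) v (drop k p)"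
    using take drop unfolding shortest_path_def by simp_all
qed

lemma dist_pos:
  assumes p: "is_path E u v p" and "u \<noteq> v"
  shows "0 < d u v"
proof -
  obtain q where q: "is_path E u v q" "path_len w q = d u v"
    using ex_shortest_path[OF p] unfolding shortest_path_def by blast
  have "q \<noteq> []" "hd q \<noteq> last q" using q(1) \<open>u \<noteq> v\<close> unfolding is_path_def by auto
  then have "2 \<le> length q" by (cases q rule: remdups_adj.cases) auto
  then show ?thesis using path_len_pos[OF path_weights_pos[OF q(1)]] q(2) by simp
qed

lemma shortest_path_dist_add:
  assumes p: "shortest_path E w u v p" and z: "z \<in> set p"
  shows "d u z + d z v = d u v"
proof -
  obtain k where k: "k < length p" "p ! k = z" using z by (auto simp: in_set_conv_nth)
  show ?thesis
    using shortest_path_split[OF p k(1)] path_len_take_drop[OF k(1), of w] p k(2)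
    unfolding shortest_path_def by simp
qed

lemma shortest_path_dist_less:
  assumes p: "shortest_path E w u v p" and z: "z \<in> set p" "z \<noteq> v"
  shows "d u z < d u v"
proof -
  obtain k where k: "k < length p" "p ! k = z" using z(1) by (auto simp: in_set_conv_nth)
  have "is_path E z v (drop k p)" using is_path_drop[of E u v p k] p k unfolding shortest_path_def by simp
  then show ?thesis using dist_pos z(2) shortest_path_dist_add[OF p z(1)] by fastforce
qed

abbreviation E_D :: "'a set set" where "E_D \<equiv> ED E w s t"

definition V_D :: "'a set" where "V_D = \<Union> {set p | p. shortest_path E w s t p}"

abbreviation R :: "'a set set" where "R \<equiv> T - E_D"

definition R_conn :: "'a \<Rightarrow> 'a \<Rightarrow> bool" where "R_conn a b \<longleftrightarrow> (\<exists>p. is_path R a b p)"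

lemma in_V_D_iff: "v \<in> V_D \<longleftrightarrow> (\<exists>p. shortest_path E w s t p \<and> v \<in> set p)"
  unfolding V_D_def by blast

lemma V_D_subset_V: "V_D \<subseteq> V"
proof
  fix v assume "v \<in> V_D"
  then obtain p where "is_path E s t p" "v \<in> set p" unfolding in_V_D_iff shortest_path_def by blast
  then show "v \<in> V" using set_path_subset s_in_V by blast
qed

lemma s_in_V_D: "s \<in> V_D" and t_in_V_D: "t \<in> V_D"
proof -
  obtain p where p: "shortest_path E w s t p" using ex_shortest_path_V[OF s_in_V t_in_V] ..
  then have "s \<in> set p \<and> t \<in> set p" using is_path_hd_last unfolding shortest_path_def by metis
  then show "s \<in> V_D" "t \<in> V_D" using p unfolding in_V_D_iff by blast+
qed

lemma E_D_subset_V_D: "e \<in> E_D \<Longrightarrow> e \<subseteq> V_D"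
proof
  fix a assume "e \<in> E_D" "a \<in> e"
  then obtain p where p: "shortest_path E w s t p" "e \<in> path_edges p" unfolding ED_def by auto
  then obtain k where "Suc k < length p" "e = {p ! k, p ! Suc k}" by (elim path_edgesE)
  then have "a \<in> set p" using \<open>a \<in> e\<close> by (auto simp: nth_mem)
  then show "a \<in> V_D" using p(1) unfolding in_V_D_iff by blast
qed

lemma V_D_dist: "v \<in> V_D \<Longrightarrow> d s v + d v t = d s t"
  unfolding in_V_D_iff using shortest_path_dist_add by blast

lemma V_D_suffix:
  assumes r: "r \<in> V_D"
  obtains S where "shortest_path E w r t S" "set S \<subseteq> V_D" "\<And>z. z \<in> set S \<Longrightarrow> z \<noteq> r \<Longrightarrow> d s r < d s z"
proof -
  obtain P where P: "shortest_path E w s t P" "r \<in> set P" using r unfolding in_V_D_iff by blast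
  then obtain k where k: "k < length P" "P ! k = r" by (auto simp: in_set_conv_nth)
  define S where "S = drop k P"
  have S: "shortest_path E w r t S" using shortest_path_split(2)[OF P(1) k(1)] k(2) S_def by simp
  have SD: "set S \<subseteq> V_D"
  proof
    fix z assume "z \<in> set S"
    then have "z \<in> set P" unfolding S_def by (rule in_set_dropD)
    then show "z \<in> V_D" using P(1) unfolding in_V_D_iff by blast
  qed
  have "d s r < d s z" if z: "z \<in> set S" "z \<noteq> r" for z
  proof -
    obtain m where m: "m < length S" "S ! m = z" using z(1) by (auto simp: in_set_conv_nth)
    have "is_path E r z (take (Suc m) S)" using is_path_take[of E r t S m] S m unfolding shortest_path_def by simp
    then have "0 < d r z" using dist_pos z(2) by metis
    moreover have "z \<in> V_D" using SD z(1) by blast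
    ultimately show ?thesis
      using shortest_path_dist_add[OF S z(1)] V_D_dist[OF r] V_D_dist[of z] by linarith
  qed
  then show thesis using that S SD by blast
qed

lemma V_D_prefix:
  assumes v: "v \<in> V_D" and p: "shortest_path E w s v p"
  shows "path_edges p \<subseteq> E_D" and "set p \<subseteq> V_D"
proof -
  obtain S where S: "shortest_path E w v t S" "set S \<subseteq> V_D"
    and far: "\<And>z. z \<in> set S \<Longrightarrow> z \<noteq> v \<Longrightarrow> d s v < d s z"
    using V_D_suffix[OF v] by blast
  have disj: "set p \<inter> set S \<subseteq> {v}"
  proof
    fix z assume z: "z \<in> set p \<inter> set S"
    show "z \<in> {v}"
    proof (rule ccontr)
      assume "z \<notin> {v}"
      then show False using far[of z] shortest_path_dist_less[OF p, of z] z by auto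
    qed
  qed
  have sv: "is_path E s v p" and vt: "is_path E v t S" using p S(1) unfolding shortest_path_def by auto
  have path: "is_path E s t (p @ tl S)" by (rule is_path_append_tl[OF sv vt disj])
  have ne: "p \<noteq> []" "S \<noteq> []" "last p = hd S"
    using sv vt unfolding is_path_def by auto
  have "path_len w (p @ tl S) = d s t"
    using path_len_append_tl[OF ne] p S(1) V_D_dist[OF v] unfolding shortest_path_def by simp
  then have st: "shortest_path E w s t (p @ tl S)" using path unfolding shortest_path_def by simp
  have "path_edges p \<subseteq> path_edges (p @ tl S)" using path_edges_append_tl[OF ne] by simp
  then show "path_edges p \<subseteq> E_D" using st unfolding ED_def by blast
  have "set p \<subseteq> set (p @ tl S)" by simp
  then show "set p \<subseteq> V_D" using st unfolding V_D_def by blast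
qed

lemma T_subset_E: "T \<subseteq> E"
  and tree_paths_unique: "\<forall>u\<in>V. \<forall>v\<in>V. \<exists>!p. is_path T u v p"
  and tree_paths_shortest: "\<forall>v\<in>V. \<forall>p. is_path T s v p \<longrightarrow> path_len w p = d s v"
  using spt unfolding shortest_path_tree_def spanning_tree_def by simp_all

lemma tree_path_ex: "v \<in> V \<Longrightarrow> \<exists>A. is_path T s v A"
  using tree_paths_unique s_in_V by blast

lemma tree_path_in_V: "is_path T s v A \<Longrightarrow> v \<in> V"
proof -
  assume A: "is_path T s v A"
  have "set A \<subseteq> insert s V" using set_path_subset[OF is_path_mono[OF A T_subset_E]] .
  moreover have "v \<in> set A" using is_path_hd_last[OF A] by blast
  ultimately show ?thesis using s_in_V by blast
qed

lemma tree_path_unique: "is_path T s v A \<Longrightarrow> is_path T s v B \<Longrightarrow> A = B"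
proof -
  assume A: "is_path T s v A" and B: "is_path T s v B"
  have "\<exists>!p. is_path T s v p" using tree_paths_unique s_in_V tree_path_in_V[OF A] by blast
  then show ?thesis using A B by blast
qed

lemma tree_path_shortest: "is_path T s v A \<Longrightarrow> shortest_path E w s v A"
proof -
  assume A: "is_path T s v A"
  then have "path_len w A = d s v" using tree_paths_shortest tree_path_in_V[OF A] by blast
  then show ?thesis using is_path_mono[OF A T_subset_E] unfolding shortest_path_def by blast
qed

lemma R_conn_refl: "R_conn a a"
  unfolding R_conn_def by (rule exI[of _ "[a]"]) simp

lemma R_conn_sym: "R_conn a b \<Longrightarrow> R_conn b a"
  unfolding R_conn_def by (metis is_path_rev)

lemma R_conn_trans: "R_conn a b \<Longrightarrow> R_conn b c \<Longrightarrow> R_conn a c"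
proof -
  assume "R_conn a b" "R_conn b c"
  then obtain p q where p: "is_path R a b p" and q: "is_path R b c q" unfolding R_conn_def by blast
  have "set p \<inter> set q \<noteq> {}" using is_path_hd_last[OF p] is_path_hd_last[OF q] by blast
  then obtain i j where "is_path R a c (take (Suc i) p @ tl (drop j q))"
    by (rule is_path_join[OF p q]) blast
  then show ?thesis unfolding R_conn_def by blast
qed

lemma R_conn_edge: "{a, b} \<in> R \<Longrightarrow> R_conn a b"
proof (cases "a = b")
  case False
  assume "{a, b} \<in> R"
  then have "is_path R a b [a, b]" using False unfolding is_path_def by simp
  then show ?thesis unfolding R_conn_def by blast
qed (simp add: R_conn_refl)

lemma R_conn_path_vertex: "is_path R a b P \<Longrightarrow> z \<in> set P \<Longrightarrow> R_conn a z \<and> R_conn z b"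
  unfolding R_conn_def by (metis in_set_conv_nth is_path_drop is_path_take)

lemma V_D_on_tree_path:
  assumes b: "b \<in> V_D" and P: "is_path R a b P" and A: "is_path T s a A"
  shows "b \<in> set A"
proof -
  have PT: "is_path T a b P" using is_path_mono[OF P] by blast
  have "set A \<inter> set P \<noteq> {}" using is_path_hd_last[OF A] is_path_hd_last[OF P] by blast
  then obtain i j where ij: "i < length A" "j < length P" "A ! i = P ! j"
    and path: "is_path T s b (take (Suc i) A @ tl (drop j P))"
    and edges: "path_edges (take (Suc i) A @ tl (drop j P)) = path_edges (take (Suc i) A) \<union> path_edges (drop j P)"
    by (rule is_path_join[OF A PT, where w = w]) blast
  have "path_edges (take (Suc i) A @ tl (drop j P)) \<subseteq> E_D"
    using V_D_prefix(1)[OF b tree_path_shortest[OF path]] .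
  moreover have "path_edges (drop j P) \<subseteq> R"
    using P path_edges_take_drop[OF ij(2)] unfolding is_path_def by blast
  ultimately have "path_edges (drop j P) = {}" using edges by blast
  then have "P ! j = b" using is_path_edgeless[OF is_path_drop[OF P ij(2)]] by blast
  then show ?thesis using ij(1,3) nth_mem by metis
qed

text \<open>Each of a and b lies on the tree path to the other, and distance from s strictly increases
  along tree paths.\<close>
lemma R_conn_V_D_eq:
  assumes a: "a \<in> V_D" and b: "b \<in> V_D" and conn: "R_conn a b"
  shows "a = b"
proof (rule ccontr)
  assume ne: "a \<noteq> b"
  have "a \<in> V" "b \<in> V" using a b V_D_subset_V by blast+
  then obtain A B where A: "is_path T s a A" and B: "is_path T s b B" using tree_path_ex by blast
  obtain P where P: "is_path R a b P" using conn unfolding R_conn_def by blast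
  have "b \<in> set A" using V_D_on_tree_path[OF b P A] .
  then have "d s b < d s a" using shortest_path_dist_less[OF tree_path_shortest[OF A]] ne by blast
  moreover have "a \<in> set B" using V_D_on_tree_path[OF a is_path_rev[OF P] B] .
  then have "d s a < d s b" using shortest_path_dist_less[OF tree_path_shortest[OF B]] ne by blast
  ultimately show False by linarith
qed

lemma V_D_conn_along_path:
  assumes "p \<noteq> []" and "last p \<in> V_D"
    and "\<forall>a b. {a, b} \<in> path_edges p \<longrightarrow> {a, b} \<in> E_D \<or> R_conn a b"
  shows "\<exists>\<rho>\<in>set p. \<rho> \<in> V_D \<and> R_conn \<rho> (hd p)"
  using assms
proof (induction p rule: induct_list012)
  case (2 a)
  then show ?case using R_conn_refl by simp
next
  case (3 a b p)
  have "\<forall>x y. {x, y} \<in> path_edges (b # p) \<longrightarrow> {x, y} \<in> E_D \<or> R_conn x y"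
    using "3.prems"(3) by simp
  moreover have "last (b # p) \<in> V_D" using "3.prems"(2) by simp
  ultimately obtain \<rho> where \<rho>: "\<rho> \<in> set (b # p)" "\<rho> \<in> V_D" "R_conn \<rho> b"
    using "3.IH"(2) by auto
  have "{a, b} \<in> E_D \<or> R_conn a b" using "3.prems"(3) by simp
  then show ?case
  proof
    assume "{a, b} \<in> E_D"
    then have "a \<in> V_D" using E_D_subset_V_D by blast
    then show ?case using R_conn_refl by auto
  next
    assume "R_conn a b"
    then have "R_conn \<rho> a" using R_conn_trans[OF \<rho>(3) R_conn_sym] by blast
    then show ?case using \<rho>(1,2) by auto
  qed
qed simp

lemma ex_V_D_R_conn: "v \<in> V \<Longrightarrow> \<exists>\<rho>. \<rho> \<in> V_D \<and> R_conn \<rho> v"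
proof -
  assume "v \<in> V"
  then obtain A where A: "is_path T s v A" using tree_path_ex by blast
  then have rA: "rev A \<noteq> []" "hd (rev A) = v" "last (rev A) = s" "path_edges (rev A) \<subseteq> T"
    unfolding is_path_def by (auto simp: hd_rev last_rev)
  have edges: "\<forall>a b. {a, b} \<in> path_edges (rev A) \<longrightarrow> {a, b} \<in> E_D \<or> R_conn a b"
  proof (intro allI impI)
    fix a b assume "{a, b} \<in> path_edges (rev A)"
    then have "{a, b} \<in> E_D \<or> {a, b} \<in> R" using rA(4) by blast
    then show "{a, b} \<in> E_D \<or> R_conn a b" using R_conn_edge by blast
  qed
  have "last (rev A) \<in> V_D" using rA(3) s_in_V_D by simp
  then show ?thesis using V_D_conn_along_path[OF rA(1) _ edges] rA(2) by blast
qed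

text \<open>The tree path to v is the tree path to \<rho>, which lies in D, followed by X.\<close>
lemma tree_path_via_V_D:
  assumes \<rho>: "\<rho> \<in> V_D" and X: "is_path R \<rho> v X" and A: "is_path T s v A"
  shows "d s \<rho> + path_len w X = d s v"
    and "\<And>z. z \<in> set A \<Longrightarrow> (z \<in> V_D \<and> d s z < d s \<rho>) \<or> R_conn z v"
proof -
  obtain A\<rho> where A\<rho>: "is_path T s \<rho> A\<rho>" using tree_path_ex \<rho> V_D_subset_V by blast
  have A\<rho>_sp: "shortest_path E w s \<rho> A\<rho>" using tree_path_shortest[OF A\<rho>] .
  have A\<rho>_D: "set A\<rho> \<subseteq> V_D" using V_D_prefix(2)[OF \<rho> A\<rho>_sp] .
  have "set A\<rho> \<inter> set X \<subseteq> {\<rho>}"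
  proof
    fix z assume "z \<in> set A\<rho> \<inter> set X"
    then show "z \<in> {\<rho>}" using A\<rho>_D R_conn_path_vertex[OF X] R_conn_V_D_eq[OF \<rho>] by blast
  qed
  then have "is_path T s v (A\<rho> @ tl X)" using is_path_append_tl[OF A\<rho> is_path_mono[OF X]] by blast
  then have A_eq: "A = A\<rho> @ tl X" using tree_path_unique[OF A] by blast
  have "A\<rho> \<noteq> []" "X \<noteq> []" "last A\<rho> = hd X" using A\<rho> X unfolding is_path_def by auto
  then have "path_len w A = path_len w A\<rho> + path_len w X" using A_eq path_len_append_tl by simp
  then show "d s \<rho> + path_len w X = d s v"
    using tree_path_shortest[OF A] A\<rho>_sp unfolding shortest_path_def by simp
  fix z assume "z \<in> set A"
  then consider "z \<in> set A\<rho>" | "z \<in> set X" using A_eq by (cases X) auto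
  then show "(z \<in> V_D \<and> d s z < d s \<rho>) \<or> R_conn z v"
  proof cases
    case 1
    then show ?thesis
      using A\<rho>_D shortest_path_dist_less[OF A\<rho>_sp] R_conn_path_vertex[OF X] is_path_hd_last[OF X]
      by blast
  next
    case 2
    then show ?thesis using R_conn_path_vertex[OF X] by blast
  qed
qed

lemma is_path_R_E: "is_path R a b P \<Longrightarrow> is_path E a b P"
  by (erule is_path_mono) (use T_subset_E in blast)

text \<open>The path runs from s along the tree to u, crosses to v, returns inside the component of v
  to its D-vertex \<rho>v and finishes along D. It is simple because \<rho>v is at least as far from s
  as the D-vertex of the component of u.\<close>
lemma st_path_across_edge:
  assumes uv: "{u, v} \<in> E" and sep: "\<not> R_conn u v"
    and \<rho>u: "\<rho>u \<in> V_D" "R_conn \<rho>u u" and \<rho>v: "\<rho>v \<in> V_D" "R_conn \<rho>v v"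
    and le: "d s \<rho>u \<le> d s \<rho>v"
  obtains p where "is_path E s t p" "{u, v} \<in> path_edges p"
    "path_len w p = d s u + w {u, v} + d s v + d s t - 2 * d s \<rho>v"
proof -
  have "{u, v} \<subseteq> V" using edge_subset_V[OF uv] .
  then obtain L A where L: "is_path T s u L" and A: "is_path T s v A" using tree_path_ex by (meson insert_subset)
  obtain Xu where Xu: "is_path R \<rho>u u Xu" using \<rho>u(2) unfolding R_conn_def by blast
  obtain X where X: "is_path R \<rho>v v X" using \<rho>v(2) unfolding R_conn_def by blast
  have L_vertices: "(z \<in> V_D \<and> d s z < d s \<rho>u) \<or> R_conn z u" if "z \<in> set L" for z
    using tree_path_via_V_D(2)[OF \<rho>u(1) Xu L that] .
  have len_X: "d s \<rho>v + path_len w X = d s v" using tree_path_via_V_D(1)[OF \<rho>v(1) X A] .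
  obtain S where S: "shortest_path E w \<rho>v t S" "set S \<subseteq> V_D"
    and far: "\<And>z. z \<in> set S \<Longrightarrow> z \<noteq> \<rho>v \<Longrightarrow> d s \<rho>v < d s z"
    using V_D_suffix[OF \<rho>v(1)] by blast
  have S_path: "is_path E \<rho>v t S" using S(1) unfolding shortest_path_def by blast
  have X_D: "z = \<rho>v" if "z \<in> set X" "z \<in> V_D" for z
    using R_conn_V_D_eq[OF \<rho>v(1) that(2)] R_conn_path_vertex[OF X that(1)] by blast
  have "set (rev X) \<inter> set S \<subseteq> {\<rho>v}" using X_D S(2) by auto
  then have M: "is_path E v t (rev X @ tl S)"
    using is_path_append_tl[OF is_path_rev[OF is_path_R_E[OF X]] S_path] by blast
  have tl_S: "z \<in> set S \<and> z \<noteq> \<rho>v" if "z \<in> set (tl S)" for z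
    using S_path that unfolding is_path_def by (cases S) auto
  have "z \<notin> set L" if z: "z \<in> set (rev X @ tl S)" for z
  proof
    assume zL: "z \<in> set L"
    from z consider "z \<in> set X" | "z \<in> set S" "z \<noteq> \<rho>v" using tl_S by auto
    then show False
    proof cases
      case 1
      then have zv: "R_conn z v" using R_conn_path_vertex[OF X] by blast
      from L_vertices[OF zL] show False
      proof
        assume "z \<in> V_D \<and> d s z < d s \<rho>u"
        then show False using X_D[OF 1] le by auto
      next
        assume "R_conn z u"
        then show False using sep R_conn_trans[OF R_conn_sym zv] by blast
      qed
    next
      case 2
      then have "z \<in> V_D" "d s \<rho>v < d s z" using S(2) far by auto
      moreover have "z = \<rho>u" if "R_conn z u"
        using R_conn_V_D_eq[OF \<rho>u(1) \<open>z \<in> V_D\<close>] R_conn_trans[OF \<rho>u(2) R_conn_sym[OF that]] by blast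
      ultimately show False using L_vertices[OF zL] le by force
    qed
  qed
  then have disj: "set L \<inter> set (rev X @ tl S) = {}" by blast
  have p: "is_path E s t (L @ (rev X @ tl S))"
    using is_path_append[OF is_path_mono[OF L T_subset_E] M disj uv] .
  have ne: "L \<noteq> []" "last L = u" "rev X @ tl S \<noteq> []" "hd (rev X @ tl S) = v"
    using L M unfolding is_path_def by auto
  have "rev X \<noteq> []" "last (rev X) = hd S" using X S_path unfolding is_path_def by (auto simp: last_rev)
  then have "path_len w (rev X @ tl S) = path_len w X + d \<rho>v t"
    using path_len_append_tl[of "rev X" S w] S(1) S_path unfolding shortest_path_def is_path_def by auto
  moreover have "path_len w L = d s u" using tree_path_shortest[OF L] unfolding shortest_path_def by blast
  ultimately have "path_len w (L @ (rev X @ tl S)) = d s u + w {u, v} + d s v + d s t - 2 * d s \<rho>v"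
    using path_len_append[OF ne(1,3), of w] ne(2,4) len_X V_D_dist[OF \<rho>v(1)] by simp
  moreover have "{u, v} \<in> path_edges (L @ (rev X @ tl S))"
    using path_edges_append[OF ne(1,3)] ne(2,4) by simp
  ultimately show thesis using that p by blast
qed

abbreviation E_tilde :: "'a set set" where "E_tilde \<equiv> Etilde E w s t T"

lemma Etilde_subset: "e \<in> E_tilde \<Longrightarrow> e \<in> E \<and> e \<notin> E_D"
  unfolding Etilde_def by blast

lemma Etilde_not_R_conn: "{x, y} \<in> E_tilde \<Longrightarrow> \<not> R_conn x y"
  unfolding Etilde_def R_conn_def by (auto simp: doubleton_eq_iff dest: is_path_rev)

lemma R_conn_if_not_Etilde:
  assumes "{a, b} \<in> E" "{a, b} \<notin> E_D" "{a, b} \<notin> E_tilde"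
  shows "R_conn a b"
proof (cases "{a, b} \<in> T")
  case True
  then show ?thesis using assms(2) R_conn_edge by blast
next
  case False
  then show ?thesis using assms unfolding Etilde_def R_conn_def by blast
qed

text \<open>Walking along an st-path that avoids E-tilde, each vertex stays in the R-component of a
  D-vertex met before it and of one met after it; a non-D edge would make these two D-vertices
  R-connected, hence equal, contradicting simplicity.\<close>
lemma outward_path_Etilde_edge:
  assumes q: "is_path E s t q" and out: "path_edges q - E_D \<noteq> {}"
  shows "\<exists>k. Suc k < length q \<and> {q ! k, q ! Suc k} \<in> E_tilde"
proof (rule ccontr)
  assume none: "\<nexists>k. Suc k < length q \<and> {q ! k, q ! Suc k} \<in> E_tilde"
  have ok: "{a, b} \<in> E_D \<or> R_conn a b" if ab: "{a, b} \<in> path_edges q" for a b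
  proof -
    obtain k where k: "Suc k < length q" "{a, b} = {q ! k, q ! Suc k}"
      using path_edgesE[OF ab] by metis
    then have "{a, b} \<notin> E_tilde" using none by metis
    moreover have "{a, b} \<in> E" using q ab unfolding is_path_def by blast
    ultimately show ?thesis using R_conn_if_not_Etilde by blast
  qed
  obtain i where i: "Suc i < length q" "{q ! i, q ! Suc i} \<notin> E_D"
    using out by (auto elim: path_edgesE)
  have conn_i: "R_conn (q ! i) (q ! Suc i)"
    using ok[OF nth_edge_in_path_edges[OF i(1)]] i(2) by blast
  have q_ne: "q \<noteq> []" "hd q = s" "last q = t" "distinct q" using q unfolding is_path_def by auto
  let ?pre = "rev (take (Suc i) q)" and ?suf = "drop (Suc i) q"
  have pre: "?pre \<noteq> []" "hd ?pre = q ! i" "last ?pre = s"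
    using i(1) q_ne by (auto simp: hd_rev last_rev last_take_Suc hd_conv_nth)
  have suf: "?suf \<noteq> []" "hd ?suf = q ! Suc i" "last ?suf = t"
    using i(1) q_ne by (auto simp: hd_drop_conv_nth)
  have "path_edges ?pre \<subseteq> path_edges q" "path_edges ?suf \<subseteq> path_edges q"
    using path_edges_take_drop[of i q] path_edges_take_drop[of "Suc i" q] i(1) by auto
  then have ok_pre: "\<forall>a b. {a, b} \<in> path_edges ?pre \<longrightarrow> {a, b} \<in> E_D \<or> R_conn a b"
    and ok_suf: "\<forall>a b. {a, b} \<in> path_edges ?suf \<longrightarrow> {a, b} \<in> E_D \<or> R_conn a b"
    using ok by blast+
  obtain \<rho>1 where \<rho>1: "\<rho>1 \<in> set (take (Suc i) q)" "\<rho>1 \<in> V_D" "R_conn \<rho>1 (q ! i)"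
    using V_D_conn_along_path[OF pre(1) _ ok_pre] pre(2,3) s_in_V_D by auto
  obtain \<rho>2 where \<rho>2: "\<rho>2 \<in> set ?suf" "\<rho>2 \<in> V_D" "R_conn \<rho>2 (q ! Suc i)"
    using V_D_conn_along_path[OF suf(1) _ ok_suf] suf(2,3) t_in_V_D by auto
  have "R_conn \<rho>1 \<rho>2" using R_conn_trans[OF R_conn_trans[OF \<rho>1(3) conn_i] R_conn_sym[OF \<rho>2(3)]] .
  then have "\<rho>1 = \<rho>2" using R_conn_V_D_eq \<rho>1(2) \<rho>2(2) by blast
  then show False
    using \<rho>1(1) \<rho>2(1) set_take_disj_set_drop_if_distinct[OF q_ne(4), of "Suc i" "Suc i"] by blast
qed

lemma dist_add_le_path_len:
  assumes q: "is_path E s t q" and k: "Suc k < length q"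
  shows "d s (q ! k) + w {q ! k, q ! Suc k} + d (q ! Suc k) t \<le> path_len w q"
proof -
  have "take (Suc k) q \<noteq> []" "drop (Suc k) q \<noteq> []" using k by auto
  from path_len_append[OF this, of w]
  have "path_len w q = path_len w (take (Suc k) q) + w {q ! k, q ! Suc k} + path_len w (drop (Suc k) q)"
    using k by (simp add: last_take_Suc hd_drop_conv_nth)
  moreover have "d s (q ! k) \<le> path_len w (take (Suc k) q)"
    using dist_le[OF is_path_take[OF q]] k by simp
  moreover have "d (q ! Suc k) t \<le> path_len w (drop (Suc k) q)"
    using dist_le[OF is_path_drop[OF q k]] .
  ultimately show ?thesis by linarith
qed

lemma outward_path_fval_bound:
  assumes q: "is_path E s t q" and out: "path_edges q - E_D \<noteq> {}"
  shows "\<exists>u v. fval E w s t T u v \<le> ereal (path_len w q)"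
proof -
  obtain k where k: "Suc k < length q" "{q ! k, q ! Suc k} \<in> E_tilde"
    using outward_path_Etilde_edge[OF q out] by blast
  then have "fval E w s t T (q ! k) (q ! Suc k) \<le> ereal (path_len w q)"
    using dist_add_le_path_len[OF q] unfolding fval_def by simp
  then show ?thesis by blast
qed

lemma path_leaving_V_D_outward:
  assumes p: "is_path E s t p" and z: "z \<in> set p" "z \<notin> V_D"
  shows "path_edges p - E_D \<noteq> {}"
proof
  assume "path_edges p - E_D = {}"
  then have "\<Union> (path_edges p) \<subseteq> V_D" using E_D_subset_V_D by blast
  moreover have "p = s # tl p" using p unfolding is_path_def by (metis list.collapse)
  then have "set p \<subseteq> insert s (\<Union> (path_edges p))" using set_subset_path_edges[of s "tl p"] by metis
  ultimately have "set p \<subseteq> V_D" using s_in_V_D by blast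
  then show False using z by blast
qed

lemma V_D_on_shortest_path_bound:
  assumes c: "c \<in> V_D" and B: "shortest_path E w y t B" and cB: "c \<in> set B"
  shows "d s y + d s t \<le> d y t + 2 * d s c"
proof -
  obtain j where j: "j < length B" "B ! j = c" using cB by (auto simp: in_set_conv_nth)
  have "shortest_path E w y c (take (Suc j) B)" using shortest_path_split(1)[OF B j(1)] j(2) by simp
  then have cy: "is_path E c y (rev (take (Suc j) B))" "path_len w (rev (take (Suc j) B)) = d y c"
    unfolding shortest_path_def by (auto intro: is_path_rev)
  obtain P where P: "is_path E s c P" "path_len w P = d s c"
    using ex_shortest_path_V[OF s_in_V] c V_D_subset_V unfolding shortest_path_def by blast
  have "d s y \<le> d s c + d y c" using dist_le_path_len_add[OF P(1) cy(1)] P(2) cy(2) by simp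
  then show ?thesis using shortest_path_dist_add[OF B cB] V_D_dist[OF c] by linarith
qed

lemma ex_outward_path_le_Etilde_cost:
  assumes xy: "{x, y} \<in> E_tilde"
  obtains p where "is_path E s t p" "path_edges p - E_D \<noteq> {}"
    "path_len w p \<le> d s x + w {x, y} + d y t"
proof -
  have xyE: "{x, y} \<in> E" "{x, y} \<notin> E_D" and sep: "\<not> R_conn x y"
    using Etilde_subset[OF xy] Etilde_not_R_conn[OF xy] by auto
  have "{x, y} \<subseteq> V" using edge_subset_V[OF xyE(1)] .
  then have xV: "x \<in> V" and yV: "y \<in> V" by auto
  obtain A where A: "is_path T s x A" using tree_path_ex[OF xV] by blast
  have A_sp: "shortest_path E w s x A" using tree_path_shortest[OF A] .
  have AE: "is_path E s x A" using A_sp unfolding shortest_path_def by blast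
  obtain B where B: "shortest_path E w y t B" using ex_shortest_path_V[OF yV t_in_V] by blast
  have BE: "is_path E y t B" using B unfolding shortest_path_def by blast
  have w_pos: "0 < w {x, y}" using weight_pos xyE(1) by blast
  consider (disjoint) "set A \<inter> set B = {}"
    | (non_D) "set A \<inter> set B \<noteq> {}" "\<forall>c\<in>set A \<inter> set B. c \<notin> V_D"
    | (D) c where "c \<in> set A" "c \<in> set B" "c \<in> V_D"
    by blast
  then show thesis
  proof cases
    case disjoint
    have ne: "A \<noteq> []" "last A = x" "B \<noteq> []" "hd B = y" using AE BE unfolding is_path_def by auto
    have "path_len w (A @ B) = d s x + w {x, y} + d y t"
      using path_len_append[OF ne(1,3)] ne(2,4) A_sp B unfolding shortest_path_def by simp
    moreover have "{x, y} \<in> path_edges (A @ B)" using path_edges_append[OF ne(1,3)] ne(2,4) by simp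
    ultimately show thesis using that is_path_append[OF AE BE disjoint xyE(1)] xyE(2) by fastforce
  next
    case non_D
    obtain i j where ij: "i < length A" "j < length B" "A ! i = B ! j"
      and p: "is_path E s t (take (Suc i) A @ tl (drop j B))"
      and len: "path_len w (take (Suc i) A @ tl (drop j B)) = path_len w (take (Suc i) A) + path_len w (drop j B)"
      by (rule is_path_join[OF AE BE non_D(1), where w = w]) blast
    have "A ! i \<in> set A \<inter> set B" using ij by (metis IntI nth_mem)
    moreover have "A ! i \<in> set (take (Suc i) A @ tl (drop j B))" using ij(1) by (simp add: take_Suc_conv_app_nth)
    ultimately have "path_edges (take (Suc i) A @ tl (drop j B)) - E_D \<noteq> {}"
      using path_leaving_V_D_outward[OF p] non_D(2) by blast
    moreover have "path_len w (take (Suc i) A) \<le> d s x" "path_len w (drop j B) \<le> d y t"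
      using path_len_take_le[OF path_weights_pos[OF AE] ij(1)] path_len_drop_le[OF path_weights_pos[OF BE] ij(2)]
        A_sp B unfolding shortest_path_def by auto
    ultimately show thesis using that[OF p] len w_pos by auto
  next
    case D
    obtain r where r: "r \<in> V_D" "R_conn r x" using ex_V_D_R_conn[OF xV] by blast
    obtain r' where r': "r' \<in> V_D" "R_conn r' y" using ex_V_D_R_conn[OF yV] by blast
    obtain X where X: "is_path R r x X" using r(2) unfolding R_conn_def by blast
    have "d s c \<le> d s r"
    proof -
      consider "d s c < d s r" | "R_conn c x" using tree_path_via_V_D(2)[OF r(1) X A D(1)] by blast
      then show ?thesis
      proof cases
        case 2
        then have "c = r" using R_conn_V_D_eq[OF D(3) r(1)] R_conn_trans[OF 2 R_conn_sym[OF r(2)]] by blast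
        then show ?thesis by simp
      qed simp
    qed
    moreover have "d s y + d s t \<le> d y t + 2 * d s c" using V_D_on_shortest_path_bound[OF D(3) B D(2)] .
    moreover obtain p where p: "is_path E s t p" "{x, y} \<in> path_edges p"
      "path_len w p \<le> d s x + w {x, y} + d s y + d s t - 2 * d s r"
    proof (cases "d s r' \<le> d s r")
      case True
      have yx: "{y, x} = {x, y}" by (rule insert_commute)
      have sep': "\<not> R_conn y x" using sep R_conn_sym by blast
      obtain p where "is_path E s t p" "{y, x} \<in> path_edges p"
        "path_len w p = d s y + w {y, x} + d s x + d s t - 2 * d s r"
        by (rule st_path_across_edge[OF xyE(1)[folded yx] sep' r' r True])
      then show thesis using that[of p] unfolding yx by simp
    next
      case False
      then have le: "d s r \<le> d s r'" by simp
      obtain p where "is_path E s t p" "{x, y} \<in> path_edges p"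
        "path_len w p = d s x + w {x, y} + d s y + d s t - 2 * d s r'"
        by (rule st_path_across_edge[OF xyE(1) sep r r' le])
      moreover have "d s x + w {x, y} + d s y + d s t - 2 * d s r' \<le> d s x + w {x, y} + d s y + d s t - 2 * d s r"
        using False by simp
      ultimately show thesis using that[of p] by simp
    qed
    ultimately have "path_len w p \<le> d s x + w {x, y} + d y t" by linarith
    moreover have "path_edges p - E_D \<noteq> {}" using p(2) xyE(2) by blast
    ultimately show thesis using that p(1) by blast
  qed
qed

end

theorem lemma13:
  fixes V :: "'a set" and E :: "'a set set" and w :: "'a set \<Rightarrow> real"
    and s t x y :: 'a and T :: "'a set set"
  assumes "simple_graph V E" and "connected_graph V E"
    and "\<forall>e\<in>E. w e > 0"
    and "s \<in> V" and "t \<in> V"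
    and "shortest_path_tree V E w s T"
    and "\<forall>u v. fval E w s t T x y \<le> fval E w s t T u v"
    and "fval E w s t T x y \<noteq> \<infinity>"
  shows "(\<exists>p. is_path E s t p \<and> ereal (path_len w p) = fval E w s t T x y
              \<and> path_edges p \<inter> Etilde E w s t T \<noteq> {})
       \<and> (\<forall>p. is_path E s t p \<and> ereal (path_len w p) = fval E w s t T x y
              \<and> path_edges p \<inter> Etilde E w s t T \<noteq> {} \<longrightarrow> optimal_outward E w s t p)"
proof -
  interpret spt_graph V E w s t T using assms(1-6) by unfold_locales
  let ?f = "fval E w s t T x y"
  have xy: "{x, y} \<in> E_tilde" using assms(8) unfolding fval_def by (auto split: if_splits)
  have lower: "?f \<le> ereal (path_len w q)" if "is_path E s t q" "path_edges q - E_D \<noteq> {}" for q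
    using outward_path_fval_bound[OF that] assms(7) order_trans by blast
  obtain p where p: "is_path E s t p" "path_edges p - E_D \<noteq> {}"
    and "path_len w p \<le> d s x + w {x, y} + d y t"
    by (rule ex_outward_path_le_Etilde_cost[OF xy])
  then have p_le: "ereal (path_len w p) \<le> ?f" using xy unfolding fval_def by simp
  obtain k where "Suc k < length p" "{p ! k, p ! Suc k} \<in> E_tilde"
    using outward_path_Etilde_edge[OF p(1,2)] by blast
  then have "path_edges p \<inter> E_tilde \<noteq> {}" using nth_edge_in_path_edges by blast
  moreover have "ereal (path_len w p) = ?f" using lower[OF p(1,2)] p_le by (rule antisym[rotated])
  moreover have "optimal_outward E w s t q"
    if q: "is_path E s t q" "ereal (path_len w q) = ?f" "path_edges q \<inter> E_tilde \<noteq> {}" for q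
  proof -
    have "path_edges q - E_D \<noteq> {}" using q(3) Etilde_subset by blast
    moreover have "path_len w q \<le> path_len w q'"
      if "is_path E s t q'" "path_edges q' - E_D \<noteq> {}" for q'
      using lower[OF that] q(2) by (metis ereal_less_eq(3))
    ultimately show ?thesis using q(1) unfolding optimal_outward_def by blast
  qed
  ultimately show ?thesis using p(1) by blast
qed

end
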